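(* The set $\{A/B : A, B \in \mathtt{PAL}\}$ is dense in the positive real numbers $\mathbb{R}^{+}$.
   Context: For an integer $n\ge 1$, $(n)_2$ denotes its binary representation, with most significant digit first and no leading zeros. A positive integer $n$ is palindromic if $(n)_2$ reads the same forwards and backwards; $\mathtt{PAL}=\{1,3,5,7,9,15,17,\dots\}$ denotes the set of palindromic numbers. *)

theory Defs
  imports "HOL-Analysis.Analysis"
begin

text \<open>Binary digits of n, least significant digit first; no leading zeros
  (bin_digits 0 = [], so for n \<ge> 1 the last element is 1).\<close>
fun bin_digits :: "nat \<Rightarrow> nat list" where
  "bin_digits n = (if n = 0 then [] else n mod 2 # bin_digits (n div 2))"

declare bin_digits.simps [simp del]

definition PAL :: "nat set" where
  "PAL = {n. n \<ge> 1 \<and> rev (bin_digits n) = bin_digits n}"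

end

theory Submission
  imports Defs
begin

text \<open>Appending to the binary expansion of \<open>m\<close> its mirror image gives a palindrome \<open>A\<close>
  with \<open>m 2\<^sup>l \<le> A < (m + 1) 2\<^sup>l\<close>, so \<open>A / 2\<^sup>k\<close> approximates any \<open>y > 0\<close> to within
  \<open>2\<^sup>-\<^sup>L\<close> for a suitable \<open>k \<ge> L\<close>. The denominator \<open>2\<^sup>k\<close> is then replaced by the
  palindrome \<open>2\<^sup>k + 1\<close>, which changes the quotient by a factor \<open>1 + O(2\<^sup>-\<^sup>k)\<close>.\<close>

fun fixed_bin_digits :: "nat \<Rightarrow> nat \<Rightarrow> nat list" where
  "fixed_bin_digits 0 a = []"
| "fixed_bin_digits (Suc k) a = a mod 2 # fixed_bin_digits k (a div 2)"

lemma bin_digits_eq_Cons: "0 < n \<Longrightarrow> bin_digits n = n mod 2 # bin_digits (n div 2)"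
  by (subst bin_digits.simps) simp

lemma bin_digits_append:
  assumes "a < 2 ^ k" and "0 < b"
  shows "bin_digits (a + 2 ^ k * b) = fixed_bin_digits k a @ bin_digits b"
  using assms
proof (induction k arbitrary: a)
  case 0
  then show ?case by simp
next
  case (Suc k)
  have "bin_digits (a + 2 ^ Suc k * b) =
      (a + 2 ^ Suc k * b) mod 2 # bin_digits ((a + 2 ^ Suc k * b) div 2)"
    using Suc.prems by (intro bin_digits_eq_Cons) simp
  also have "\<dots> = a mod 2 # bin_digits (a div 2 + 2 ^ k * b)"
    by (simp add: mult.assoc add.commute)
  also have "\<dots> = fixed_bin_digits (Suc k) a @ bin_digits b"
    using Suc by simp
  finally show ?case .
qed

lemma set_bin_digits: "set (bin_digits m) \<subseteq> {0, 1}"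
  by (induction m rule: bin_digits.induct) (subst bin_digits.simps, auto)

lemma fixed_bin_digits_horner_sum:
  assumes "set xs \<subseteq> {0, 1}"
  shows "fixed_bin_digits (length xs) (horner_sum id 2 xs) = xs"
  using assms by (induction xs) auto

lemma horner_sum_bin_less:
  fixes xs :: "nat list"
  assumes "set xs \<subseteq> {0, 1}"
  shows "horner_sum id 2 xs < 2 ^ length xs"
  using assms by (induction xs) auto

lemma PAL_between:
  assumes "0 < m"
  obtains A l where "A \<in> PAL" "m * 2 ^ l \<le> A" "A < (m + 1) * 2 ^ l"
proof -
  define d where "d = bin_digits m"
  define r where "r = horner_sum id 2 (rev d)"
  have digits: "set (rev d) \<subseteq> {0, 1}" using set_bin_digits d_def by simp
  have r_less: "r < 2 ^ length d"
    using horner_sum_bin_less[OF digits] r_def by simp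
  have "bin_digits (r + 2 ^ length d * m) = rev d @ d"
    using bin_digits_append[OF r_less assms] fixed_bin_digits_horner_sum[OF digits]
    by (simp add: r_def d_def)
  then have "r + 2 ^ length d * m \<in> PAL"
    using assms unfolding PAL_def by (simp add: Suc_le_eq)
  moreover have "m * 2 ^ length d \<le> r + 2 ^ length d * m"
    and "r + 2 ^ length d * m < (m + 1) * 2 ^ length d"
    using r_less by (simp_all add: algebra_simps)
  ultimately show thesis by (rule that)
qed

lemma fixed_bin_digits_0: "fixed_bin_digits k 0 = replicate k 0"
  by (induction k) auto

lemma power2_plus_one_PAL:
  assumes "0 < k"
  shows "2 ^ k + 1 \<in> PAL"
proof -
  obtain j where k: "k = Suc j" using assms by (cases k) auto
  have "bin_digits (1 + 2 ^ k * 1) = fixed_bin_digits k 1 @ bin_digits 1"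
    by (intro bin_digits_append) (use one_less_power[of "2::nat" k] assms in simp_all)
  then have "bin_digits (2 ^ k + 1) = 1 # replicate j 0 @ [1]"
    by (simp add: k fixed_bin_digits_0 bin_digits.simps)
  then show ?thesis unfolding PAL_def by simp
qed

lemma PAL_dyadic_approx:
  fixes y :: real
  assumes y: "1 \<le> y * 2 ^ L"
  obtains A k where "A \<in> PAL" "L \<le> k" "\<bar>real A / 2 ^ k - y\<bar> \<le> 1 / 2 ^ L"
proof -
  define m where "m = nat \<lfloor>y * 2 ^ L\<rfloor>"
  have "real m \<le> y * 2 ^ L" "y * 2 ^ L < real m + 1"
    using y unfolding m_def by linarith+
  then have m: "real m / 2 ^ L \<le> y" "y < (real m + 1) / 2 ^ L"
    by (simp_all add: field_simps)
  have "0 < m" using y unfolding m_def by linarith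
  then obtain A l where A: "A \<in> PAL" "m * 2 ^ l \<le> A" "A < (m + 1) * 2 ^ l"
    by (rule PAL_between)
  have "real (m * 2 ^ l) \<le> real A" "real A < real ((m + 1) * 2 ^ l)"
    using A(2,3) by (simp only: of_nat_le_iff of_nat_less_iff)+
  then have "real m / 2 ^ L \<le> A / 2 ^ (l + L)" "A / 2 ^ (l + L) < (real m + 1) / 2 ^ L"
    by (simp_all add: power_add field_simps)
  moreover have "(real m + 1) / 2 ^ L - real m / 2 ^ L = 1 / 2 ^ L"
    by (simp add: diff_divide_distrib[symmetric])
  ultimately have "\<bar>real A / 2 ^ (l + L) - y\<bar> \<le> 1 / 2 ^ L"
    using m by (simp add: abs_le_iff)
  then show thesis
    using that[OF A(1), of "l + L"] by simp
qed

lemma PAL_ratio_approx: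
  fixes y :: real
  assumes "0 < L" and "1 \<le> y * 2 ^ L"
  obtains A B where "A \<in> PAL" "B \<in> PAL" "\<bar>real A / real B - y\<bar> \<le> (y + 2) / 2 ^ L"
proof -
  obtain A k where A: "A \<in> PAL" "L \<le> k" and close: "\<bar>real A / 2 ^ k - y\<bar> \<le> 1 / 2 ^ L"
    using PAL_dyadic_approx[OF assms(2)] by blast
  define q :: real where "q = A / 2 ^ k"
  have "0 \<le> q" by (simp add: q_def)
  have "(1::real) / 2 ^ L \<le> 1" by simp
  with close have "q \<le> y + 1" unfolding q_def by linarith
  have "(2::real) ^ L \<le> 2 ^ k" using A(2) by (rule power_increasing) simp
  then have pow_le: "(2::real) ^ L \<le> 2 ^ k + 1" by linarith
  have "real A / real (2 ^ k + 1) - q = - q / (2 ^ k + 1)"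
    by (simp add: q_def divide_simps) (simp add: algebra_simps add_nonneg_eq_0_iff)
  then have "\<bar>real A / real (2 ^ k + 1) - q\<bar> = q / (2 ^ k + 1)"
    using \<open>0 \<le> q\<close> by simp
  also have "\<dots> \<le> q / 2 ^ L"
    by (rule divide_left_mono[OF pow_le \<open>0 \<le> q\<close>]) (simp add: add_pos_pos)
  also have "\<dots> \<le> (y + 1) / 2 ^ L"
    using \<open>q \<le> y + 1\<close> by (simp add: divide_right_mono)
  finally have "\<bar>real A / real (2 ^ k + 1) - y\<bar> \<le> (y + 1) / 2 ^ L + 1 / 2 ^ L"
    using close unfolding q_def by linarith
  also have "\<dots> = (y + 2) / 2 ^ L"
    by (simp add: add_divide_distrib[symmetric])
  finally have bound: "\<bar>real A / real (2 ^ k + 1) - y\<bar> \<le> (y + 2) / 2 ^ L" .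
  have "2 ^ k + 1 \<in> PAL"
    using assms A(2) by (intro power2_plus_one_PAL) simp
  then show thesis by (rule that[OF A(1) _ bound])
qed

theorem theorem2:
  shows "closure {real A / real B | A B. A \<in> PAL \<and> B \<in> PAL} \<supseteq> {0<..}"
proof
  fix x :: real
  assume "x \<in> {0<..}"
  then have "0 < x" by simp
  show "x \<in> closure {real A / real B | A B. A \<in> PAL \<and> B \<in> PAL}"
    unfolding closure_approachable
  proof (intro allI impI)
    fix e :: real
    assume "0 < e"
    obtain N :: nat where N: "max (1 / x) ((x + 2) / e) < 2 ^ N"
      using real_arch_pow[of 2 "max (1 / x) ((x + 2) / e)"] by auto
    define L where "L = Suc N"
    have "(2::real) ^ N \<le> 2 ^ L" by (simp add: L_def)
    with N \<open>0 < x\<close> \<open>0 < e\<close> have L: "0 < L" "1 \<le> x * 2 ^ L" "(x + 2) / 2 ^ L < e"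
      by (simp_all add: L_def field_simps)
    obtain A B where "A \<in> PAL" "B \<in> PAL" "\<bar>real A / real B - x\<bar> \<le> (x + 2) / 2 ^ L"
      by (rule PAL_ratio_approx[OF L(1,2)])
    with L(3) show "\<exists>y\<in>{real A / real B | A B. A \<in> PAL \<and> B \<in> PAL}. dist y x < e"
      by (intro bexI[of _ "real A / real B"]) (auto simp: dist_real_def)
  qed
qed

end
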